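(* Let $p,k\ge 1$ be integers, let $a_1,\dots,a_k\in\mathbb{R}$, and let $\mathbf{f}:\mathbb{R}^p\to\mathbb{R}^p$ be a differentiable flux. Let $\mathbb{M}_1,\dots,\mathbb{M}_k:\mathbb{R}^p\to\mathbb{R}^p$ be differentiable maps satisfying, for all $\mathbf{u}$, $\sum_{i=1}^k \mathbb{M}_i(\mathbf{u})=\mathbf{u}$ and $\sum_{i=1}^k a_i\mathbb{M}_i(\mathbf{u})=\mathbf{f}(\mathbf{u})$, and set $\mathbf{m}_2(\mathbf{u})=\sum_{i=1}^k a_i^2\mathbb{M}_i(\mathbf{u})$. Fix $\mathbf{u}$ and suppose there exists a strictly convex entropy $\eta(\mathbf{u})$ with Hessian matrix $\mathbf{A}_0$ such that (1) $\mathbf{A}_0\mathbf{f}'(\mathbf{u})$ is symmetric, (2) $\mathbf{A}_0\mathbb{M}_i'(\mathbf{u})$ is symmetric positive definite for all $i$, and (3) $\min_i|a_i|>\rho(\mathbf{f}'(\mathbf{u}))$ (spectral radius). Let $\mathbf{D}=\mathbf{D}(\mathbf{u})$ be a $p\times p$ matrix and assume that $\mathbf{D}\mathbf{A}_0^{-1}$ is symmetric and has positive eigenvalues. Let $\varepsilon>0$, $\omega>0$, and define the $p\times p$ matrix $\varepsilon\tilde{\Omega}^{-1}$ by $$\varepsilon\,\omega\,\tilde{\Omega}^{-1}=\mathbf{D}(\mathbf{u})\left[\mathbf{m}_2'(\mathbf{u})-(\mathbf{f}'(\mathbf{u}))^2\right]^{-1}.$$ Then $\varepsilon\tilde{\Omega}^{-1}$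 has real non-negative eigenvalues.
   Context: Primes denote Jacobian matrices with respect to $\mathbf{u}$. Here $\mathbf{D}$ is the diffusion matrix of the target convection-diffusion system $\partial_t\mathbf{u}+\partial_x\mathbf{f}(\mathbf{u})=\partial_x(\mathbf{D}\partial_x\mathbf{u})$, $\tilde{\Omega}$ is the block of the collision matrix $\Omega=\mathbf{I}_k\otimes\tilde{\Omega}$ of the kinetic model, $\varepsilon$ is the Knudsen number and $\omega=\ell/\|\Lambda\|$ with $\ell$ a characteristic length. Under the stated hypotheses $\mathbf{m}_2'(\mathbf{u})-(\mathbf{f}'(\mathbf{u}))^2$ is invertible, so the defining relation makes sense. *)

theory Defs
  imports "HOL-Analysis.Analysis"
begin

definition strictly_convex_on :: "'a::real_vector set \<Rightarrow> ('a \<Rightarrow> real) \<Rightarrow> bool" where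
  "strictly_convex_on S g \<longleftrightarrow> convex S \<and>
     (\<forall>x\<in>S. \<forall>y\<in>S. x \<noteq> y \<longrightarrow> (\<forall>t::real. 0 < t \<and> t < 1 \<longrightarrow>
        g ((1 - t) *\<^sub>R x + t *\<^sub>R y) < (1 - t) * g x + t * g y))"

definition gradient_vec :: "(real^'n \<Rightarrow> real) \<Rightarrow> real^'n \<Rightarrow> real^'n" where
  "gradient_vec g v = (\<chi> j. frechet_derivative g (at v) (axis j 1))"

definition hessian :: "(real^'n \<Rightarrow> real) \<Rightarrow> real^'n \<Rightarrow> real^'n^'n" where
  "hessian g v = jacobian (gradient_vec g) (at v)"

definition cmat :: "real^'n^'m \<Rightarrow> complex^'n^'m" where
  "cmat A = (\<chi> i j. complex_of_real (A $ i $ j))"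

definition is_eigenvalue :: "real^'n^'n \<Rightarrow> complex \<Rightarrow> bool" where
  "is_eigenvalue A lam \<longleftrightarrow> (\<exists>v::complex^'n. v \<noteq> 0 \<and> cmat A *v v = lam *s v)"

definition spectral_radius :: "real^'n^'n \<Rightarrow> real" where
  "spectral_radius A = Sup {cmod lam | lam. is_eigenvalue A lam}"

definition sym_mat :: "real^'n^'n \<Rightarrow> bool" where
  "sym_mat A \<longleftrightarrow> transpose A = A"

definition pos_def_sym :: "real^'n^'n \<Rightarrow> bool" where
  "pos_def_sym A \<longleftrightarrow> sym_mat A \<and> (\<forall>x. x \<noteq> 0 \<longrightarrow> x \<bullet> (A *v x) > 0)"

end

theory Submission
  imports Defs
begin

text \<open>Write \<open>J\<^sub>i\<close> for the Jacobian of \<open>M\<^sub>i\<close> at \<open>u\<close>, \<open>J = f'(u)\<close> and \<open>S\<^sub>i = A\<^sub>0 J\<^sub>i\<close>.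
  The moment relations \<open>\<Sum> J\<^sub>i = I\<close>, \<open>\<Sum> a\<^sub>i J\<^sub>i = J\<close>, \<open>\<Sum> a\<^sub>i\<^sup>2 J\<^sub>i = m\<^sub>2'(u)\<close> give
  \<open>A\<^sub>0 (m\<^sub>2'(u) - J\<^sup>2) = \<Sum> (a\<^sub>i I - J)\<^sup>T S\<^sub>i (a\<^sub>i I - J)\<close>, and since \<open>|a\<^sub>i|\<close> exceeds the
  spectral radius of \<open>J\<close>, every \<open>a\<^sub>i I - J\<close> is injective; so \<open>S = A\<^sub>0 B\<close> with
  \<open>B = m\<^sub>2'(u) - J\<^sup>2\<close> is symmetric positive definite. As \<open>A\<^sub>0 = \<Sum> S\<^sub>i\<close> is symmetric,
  \<open>Q = A\<^sub>0 B\<^sup>-\<^sup>1 = B\<^sup>-\<^sup>T S B\<^sup>-\<^sup>1\<close> is symmetric positive definite as well, and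
  \<open>P = D A\<^sub>0\<^sup>-\<^sup>1\<close> is positive definite because its least Rayleigh quotient is an eigenvalue.
  Hence \<open>\<epsilon> \<Omega>\<^sup>-\<^sup>1 = \<omega>\<^sup>-\<^sup>1 P Q\<close>, and an eigenvalue of a product of a positive semidefinite
  and a positive definite symmetric matrix is a quotient of two real quadratic forms, so it is
  real and non-negative.\<close>

lemma matrix_add_rdistrib: "((A::'a::semiring_1^'n^'m) + B) ** C = A ** C + B ** C"
  by (simp add: matrix_matrix_mult_def vec_eq_iff sum.distrib algebra_simps)

lemma matrix_diff_ldistrib: "(A::'a::ring_1^'n^'m) ** (B - C) = A ** B - A ** C"
  by (simp add: matrix_matrix_mult_def vec_eq_iff sum_subtractf algebra_simps)

lemma matrix_diff_rdistrib: "((A::'a::ring_1^'n^'m) - B) ** C = A ** C - B ** C"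
  by (simp add: matrix_matrix_mult_def vec_eq_iff sum_subtractf algebra_simps)

lemma matrix_sum_ldistrib: "(A::'a::semiring_1^'n^'m) ** (\<Sum>i\<in>I. B i) = (\<Sum>i\<in>I. A ** B i)"
  by (induction I rule: infinite_finite_induct) (simp_all add: matrix_add_ldistrib)

lemma matrix_sum_rdistrib: "(\<Sum>i\<in>I. A i) ** (B::'a::semiring_1^'n^'m) = (\<Sum>i\<in>I. A i ** B)"
  by (induction I rule: infinite_finite_induct) (simp_all add: matrix_add_rdistrib)

lemma matrix_vector_mult_sum_left: "(\<Sum>i\<in>I. A i) *v (x::'a::semiring_1^'n) = (\<Sum>i\<in>I. A i *v x)"
  by (induction I rule: infinite_finite_induct) (simp_all add: matrix_vector_mult_add_rdistrib)

lemma transpose_diff: "transpose ((A::'a::ab_group_add^'n^'m) - B) = transpose A - transpose B"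
  by (simp add: transpose_def vec_eq_iff)

lemma transpose_sum: "transpose (\<Sum>i\<in>I. A i) = (\<Sum>i\<in>I. transpose (A i :: 'a::comm_monoid_add^'n^'m))"
  by (induction I rule: infinite_finite_induct) (simp_all add: transpose_def vec_eq_iff)

lemma matrix_inv_right: "invertible A \<Longrightarrow> A ** matrix_inv A = mat 1"
  and matrix_inv_left: "invertible A \<Longrightarrow> matrix_inv A ** A = mat 1"
  unfolding matrix_inv_def invertible_def by (metis (mono_tags, lifting) someI_ex)+

lemma sym_mat_inner: "sym_mat A \<Longrightarrow> x \<bullet> (A *v y) = y \<bullet> (A *v x)"
  unfolding sym_mat_def by (metis dot_lmul_matrix inner_commute transpose_matrix_vector)

lemma sym_mat_sum: "(\<And>i. i \<in> I \<Longrightarrow> sym_mat (A i)) \<Longrightarrow> sym_mat (\<Sum>i\<in>I. A i)"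
  by (simp add: sym_mat_def transpose_sum)

lemma sym_mat_congruence: "sym_mat S \<Longrightarrow> sym_mat (transpose X ** S ** X)"
  by (simp add: sym_mat_def matrix_transpose_mul matrix_mul_assoc)

lemma inner_transpose_matrix_vector: "x \<bullet> (transpose A *v y) = (A *v x) \<bullet> (y::real^'n)"
  by (simp add: dot_lmul_matrix[symmetric] inner_commute)

lemma inner_congruence:
  fixes S X :: "real^'n^'n"
  shows "x \<bullet> ((transpose X ** S ** X) *v x) = (X *v x) \<bullet> (S *v (X *v x))"
  unfolding matrix_vector_mul_assoc[symmetric] by (rule inner_transpose_matrix_vector)

lemma pos_def_sym_nonneg: "pos_def_sym S \<Longrightarrow> 0 \<le> x \<bullet> (S *v x)"
  unfolding pos_def_sym_def by (cases "x = 0") (auto intro: less_imp_le)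

lemma pos_def_sym_sum_congruence:
  fixes S X :: "'i \<Rightarrow> real^'n^'n"
  assumes "finite I" "j \<in> I"
    and pd: "\<And>i. i \<in> I \<Longrightarrow> pos_def_sym (S i)"
    and ker: "\<And>x. X j *v x = 0 \<Longrightarrow> x = 0"
  shows "pos_def_sym (\<Sum>i\<in>I. transpose (X i) ** S i ** X i)"
  unfolding pos_def_sym_def
proof (intro conjI allI impI)
  show "sym_mat (\<Sum>i\<in>I. transpose (X i) ** S i ** X i)"
    using pd by (intro sym_mat_sum sym_mat_congruence) (simp add: pos_def_sym_def)
  fix x :: "real^'n"
  assume "x \<noteq> 0"
  then have "X j *v x \<noteq> 0" using ker by blast
  then have "0 < (X j *v x) \<bullet> (S j *v (X j *v x))"
    using pd \<open>j \<in> I\<close> by (simp add: pos_def_sym_def)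
  then show "0 < x \<bullet> ((\<Sum>i\<in>I. transpose (X i) ** S i ** X i) *v x)"
    unfolding matrix_vector_mult_sum_left inner_sum_right inner_congruence
    using assms pd by (intro sum_pos2[of I j]) (auto intro: pos_def_sym_nonneg)
qed

lemma pos_def_sym_congruence:
  fixes S X :: "real^'n^'n"
  assumes "pos_def_sym S" "\<And>x. X *v x = 0 \<Longrightarrow> x = 0"
  shows "pos_def_sym (transpose X ** S ** X)"
  using pos_def_sym_sum_congruence[of "{()}" "()" "\<lambda>_. S" "\<lambda>_. X"] assms by simp

lemma pos_def_sym_mult_kernel_trivial:
  fixes A B :: "real^'n^'n"
  assumes "pos_def_sym (A ** B)" "B *v x = 0"
  shows "x = 0"
proof (rule ccontr)
  assume "x \<noteq> 0"
  then have "0 < x \<bullet> ((A ** B) *v x)"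
    using assms(1) by (simp add: pos_def_sym_def)
  then show False
    using assms(2) by (simp flip: matrix_vector_mul_assoc)
qed

lemma pos_def_sym_mult_matrix_inv:
  fixes A B :: "real^'n^'n"
  assumes A: "sym_mat A" and AB: "pos_def_sym (A ** B)"
  shows "pos_def_sym (A ** matrix_inv B)"
proof -
  let ?Bi = "matrix_inv B"
  have "invertible B"
    using pos_def_sym_mult_kernel_trivial[OF AB] invertible_left_inverse matrix_left_invertible_ker by blast
  then have B_Bi: "B ** ?Bi = mat 1"
    by (rule matrix_inv_right)
  have "A ** B = transpose B ** A"
    using A AB by (simp add: pos_def_sym_def sym_mat_def matrix_transpose_mul)
  then have "transpose ?Bi ** (A ** B) ** ?Bi = transpose (B ** ?Bi) ** A ** ?Bi"
    by (simp add: matrix_transpose_mul matrix_mul_assoc)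
  also have "\<dots> = A ** ?Bi"
    by (simp add: B_Bi)
  finally have "A ** ?Bi = transpose ?Bi ** (A ** B) ** ?Bi" ..
  moreover have "?Bi *v x = 0 \<Longrightarrow> x = 0" for x
    by (metis B_Bi matrix_vector_mul_assoc matrix_vector_mul_lid matrix_vector_mult_0_right)
  ultimately show ?thesis
    using pos_def_sym_congruence[OF AB] by simp
qed

definition cvec :: "real^'n \<Rightarrow> complex^'n" where
  "cvec x = (\<chi> i. complex_of_real (x $ i))"

lemma cmat_cvec: "cmat A *v cvec x = cvec (A *v x)"
  by (simp add: cmat_def cvec_def matrix_vector_mult_def vec_eq_iff)

lemma cmat_mult: "cmat (A ** B) = cmat A ** cmat B"
  by (simp add: cmat_def matrix_matrix_mult_def vec_eq_iff)

lemma is_eigenvalue_of_real: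
  assumes "x \<noteq> 0" "A *v x = c *\<^sub>R x"
  shows "is_eigenvalue A (complex_of_real c)"
  unfolding is_eigenvalue_def
proof (intro exI conjI)
  show "cvec x \<noteq> 0"
    using assms(1) by (auto simp: cvec_def vec_eq_iff)
  show "cmat A *v cvec x = complex_of_real c *s cvec x"
    unfolding cmat_cvec using assms(2) by (simp add: cvec_def vec_eq_iff)
qed

lemma is_eigenvalue_scaleR:
  assumes "is_eigenvalue (c *\<^sub>R A) lam" "c \<noteq> 0"
  shows "is_eigenvalue A (lam / complex_of_real c)"
proof -
  obtain v where v: "v \<noteq> 0" "cmat (c *\<^sub>R A) *v v = lam *s v"
    using assms(1) unfolding is_eigenvalue_def by blast
  have "cmat (c *\<^sub>R A) *v v = complex_of_real c *s (cmat A *v v)"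
    by (simp add: cmat_def matrix_vector_mult_def vec_eq_iff sum_distrib_left algebra_simps)
  with v(2) assms(2) have "cmat A *v v = (lam / complex_of_real c) *s v"
    by (auto simp: vec_eq_iff field_simps)
  with v(1) show ?thesis
    unfolding is_eigenvalue_def by blast
qed

lemma norm_vector_scalar_mult: "norm (c *s v) = norm c * norm (v::'a::real_normed_field^'n)"
  by (simp add: norm_vec_def L2_set_right_distrib norm_mult)

lemma norm_eigenvalue_le_spectral_radius:
  assumes "is_eigenvalue A lam"
  shows "cmod lam \<le> spectral_radius A"
proof -
  obtain K where K: "\<And>v. norm (cmat A *v v) \<le> norm v * K"
    using bounded_linear.pos_bounded[OF matrix_vector_mul_bounded_linear] by blast
  have "cmod \<mu> \<le> K" if ev: "is_eigenvalue A \<mu>" for \<mu>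
  proof -
    obtain v where "v \<noteq> 0" "cmat A *v v = \<mu> *s v"
      using ev unfolding is_eigenvalue_def by blast
    then have "cmod \<mu> * norm v \<le> K * norm v" "0 < norm v"
      using K[of v] by (simp_all add: norm_vector_scalar_mult mult.commute)
    then show ?thesis by simp
  qed
  then show ?thesis
    unfolding spectral_radius_def using assms by (intro cSup_upper bdd_aboveI) auto
qed

lemma spectral_radius_less_imp_kernel_trivial:
  assumes "spectral_radius J < \<bar>c\<bar>" "(c *\<^sub>R mat 1 - J) *v x = 0"
  shows "x = 0"
proof (rule ccontr)
  assume "x \<noteq> 0"
  moreover have "J *v x = c *\<^sub>R x"
    using assms(2) by (simp add: matrix_vector_mult_diff_rdistrib flip: scaleR_matrix_vector_assoc)
  ultimately have "is_eigenvalue J (complex_of_real c)"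
    by (rule is_eigenvalue_of_real)
  then show False
    using norm_eigenvalue_le_spectral_radius assms(1) by fastforce
qed

lemma linear_coeff_zero_if_quadratic_nonneg:
  fixes c d :: real
  assumes "\<And>t. 0 \<le> 2 * t * c + t\<^sup>2 * d"
  shows "c = 0"
proof -
  have "0 \<le> d"
    using assms[of 1] assms[of "-1"] by simp
  define t where "t = - c / (d + 1)"
  have "t * (d + 1) = - c"
    using \<open>0 \<le> d\<close> by (simp add: t_def)
  have "0 \<le> (2 * t * c + t\<^sup>2 * d) * (d + 1)\<^sup>2"
    using assms[of t] by simp
  also have "\<dots> = 2 * c * (t * (d + 1)) * (d + 1) + (t * (d + 1))\<^sup>2 * d"
    by (simp add: power2_eq_square algebra_simps)
  also have "\<dots> = - c\<^sup>2 * (d + 2)"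
    unfolding \<open>t * (d + 1) = - c\<close> by (simp add: power2_eq_square algebra_simps)
  finally show ?thesis
    using \<open>0 \<le> d\<close> by (simp add: mult_le_0_iff)
qed

text \<open>A minimiser of the Rayleigh quotient on the unit sphere is an eigenvector.\<close>
lemma sym_mat_least_eigenpair:
  fixes P :: "real^'n^'n"
  assumes sym: "sym_mat P"
  obtains x0 m where "x0 \<noteq> 0" "P *v x0 = m *\<^sub>R x0" "\<And>x. m * (x \<bullet> x) \<le> x \<bullet> (P *v x)"
proof -
  define q where "q = (\<lambda>x::real^'n. x \<bullet> (P *v x))"
  have q_cont: "continuous_on (sphere 0 1) q"
    unfolding q_def by (intro continuous_intros)
  obtain x0 where x0: "x0 \<in> sphere 0 1" and min: "\<And>y. y \<in> sphere 0 1 \<Longrightarrow> q x0 \<le> q y"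
    using continuous_attains_inf[OF compact_sphere _ q_cont] by auto
  define m where "m = q x0"
  have x0_unit: "x0 \<bullet> x0 = 1"
    using x0 by (simp add: dot_square_norm)
  have lower: "m * (x \<bullet> x) \<le> q x" for x
  proof (cases "x = 0")
    case False
    have "m \<le> q ((1 / norm x) *\<^sub>R x)"
      unfolding m_def using False by (intro min) simp
    also have "\<dots> = q x / (x \<bullet> x)"
      by (simp add: q_def matrix_vector_mult_scaleR dot_square_norm power2_eq_square)
    finally show ?thesis
      using False by (simp add: field_simps)
  qed (simp add: q_def)
  define y where "y = P *v x0 - m *\<^sub>R x0"
  have "y \<bullet> y = 0"
  proof (rule linear_coeff_zero_if_quadratic_nonneg)
    fix t :: real
    have "0 \<le> q (x0 + t *\<^sub>R y) - m * ((x0 + t *\<^sub>R y) \<bullet> (x0 + t *\<^sub>R y))"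
      using lower by simp
    also have "\<dots> = 2 * t * (y \<bullet> (P *v x0) - m * (y \<bullet> x0)) + t\<^sup>2 * (q y - m * (y \<bullet> y))"
      using sym_mat_inner[OF sym, of x0 y] x0_unit
      by (simp add: q_def m_def algebra_simps inner_add_left inner_add_right power2_eq_square
          inner_commute)
    also have "y \<bullet> (P *v x0) - m * (y \<bullet> x0) = y \<bullet> y"
      by (simp add: y_def inner_diff_right)
    finally show "0 \<le> 2 * t * (y \<bullet> y) + t\<^sup>2 * (q y - m * (y \<bullet> y))" .
  qed
  then have "P *v x0 = m *\<^sub>R x0"
    by (simp add: y_def)
  moreover have "x0 \<noteq> 0"
    using x0_unit by auto
  ultimately show ?thesis
    using that lower unfolding q_def by blast
qed

lemma sym_mat_pos_eigenvalues_imp_pos_def_sym: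
  fixes P :: "real^'n^'n"
  assumes sym: "sym_mat P" and pos: "\<And>lam. is_eigenvalue P lam \<Longrightarrow> Im lam = 0 \<and> 0 < Re lam"
  shows "pos_def_sym P"
proof -
  obtain x0 m where "x0 \<noteq> 0" "P *v x0 = m *\<^sub>R x0" and lower: "\<And>x. m * (x \<bullet> x) \<le> x \<bullet> (P *v x)"
    using sym_mat_least_eigenpair[OF sym] by blast
  then have "0 < m"
    using pos[of "complex_of_real m"] is_eigenvalue_of_real by auto
  have "0 < x \<bullet> (P *v x)" if "x \<noteq> 0" for x
    using lower[of x] \<open>0 < m\<close> that by (smt (verit) inner_gt_zero_iff mult_pos_pos)
  with sym show ?thesis
    unfolding pos_def_sym_def by blast
qed

definition herm_inner :: "complex^'n \<Rightarrow> complex^'n \<Rightarrow> complex" where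
  "herm_inner w z = (\<Sum>i\<in>UNIV. cnj (w $ i) * z $ i)"

definition Re_vec :: "complex^'n \<Rightarrow> real^'n" where
  "Re_vec w = (\<chi> i. Re (w $ i))"

definition Im_vec :: "complex^'n \<Rightarrow> real^'n" where
  "Im_vec w = (\<chi> i. Im (w $ i))"

lemma Re_vec_Im_vec_eq_0: "Re_vec w = 0 \<Longrightarrow> Im_vec w = 0 \<Longrightarrow> w = 0"
  by (simp add: Re_vec_def Im_vec_def vec_eq_iff complex_eq_iff)

lemma herm_inner_scalar_right: "herm_inner w (c *s z) = c * herm_inner w z"
  by (simp add: herm_inner_def sum_distrib_left algebra_simps)

lemma herm_inner_cmat_right: "herm_inner w (cmat A *v z) = herm_inner (cmat (transpose A) *v w) z"
proof -
  have "herm_inner w (cmat A *v z) = (\<Sum>i\<in>UNIV. \<Sum>j\<in>UNIV. cnj (w $ i) * (of_real (A $ i $ j) * z $ j))"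
    by (simp add: herm_inner_def cmat_def matrix_vector_mult_def sum_distrib_left)
  also have "\<dots> = (\<Sum>j\<in>UNIV. \<Sum>i\<in>UNIV. cnj (w $ i) * (of_real (A $ i $ j) * z $ j))"
    by (rule sum.swap)
  also have "\<dots> = herm_inner (cmat (transpose A) *v w) z"
    by (simp add: herm_inner_def cmat_def matrix_vector_mult_def transpose_def
        sum_distrib_left sum_distrib_right algebra_simps)
  finally show ?thesis .
qed

lemma herm_inner_sym_mat:
  fixes A :: "real^'n^'n"
  assumes "sym_mat A"
  shows "herm_inner w (cmat A *v w) =
    complex_of_real (Re_vec w \<bullet> (A *v Re_vec w) + Im_vec w \<bullet> (A *v Im_vec w))"
proof -
  let ?x = "Re_vec w" and ?y = "Im_vec w"
  have expand: "herm_inner w (cmat A *v w) =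
      (\<Sum>i\<in>UNIV. \<Sum>j\<in>UNIV. cnj (w $ i) * (of_real (A $ i $ j) * w $ j))"
    by (simp add: herm_inner_def cmat_def matrix_vector_mult_def sum_distrib_left)
  have "?x \<bullet> (A *v ?x) + ?y \<bullet> (A *v ?y) =
      (\<Sum>i\<in>UNIV. \<Sum>j\<in>UNIV. A $ i $ j * (?x $ i * ?x $ j + ?y $ i * ?y $ j))"
    by (simp add: inner_vec_def matrix_vector_mult_def sum_distrib_left sum.distrib[symmetric]
        algebra_simps)
  then have re: "Re (herm_inner w (cmat A *v w)) = ?x \<bullet> (A *v ?x) + ?y \<bullet> (A *v ?y)"
    unfolding expand by (simp add: Re_sum Re_vec_def Im_vec_def algebra_simps)
  have A_entry: "A $ j $ i = A $ i $ j" for i j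
    using assms unfolding sym_mat_def transpose_def by (metis vec_lambda_beta)
  have "(\<Sum>i\<in>UNIV. \<Sum>j\<in>UNIV. A $ i $ j * (?y $ i * ?x $ j)) =
      (\<Sum>j\<in>UNIV. \<Sum>i\<in>UNIV. A $ i $ j * (?y $ i * ?x $ j))"
    by (rule sum.swap)
  also have "\<dots> = (\<Sum>i\<in>UNIV. \<Sum>j\<in>UNIV. A $ i $ j * (?x $ i * ?y $ j))"
    by (simp add: A_entry algebra_simps)
  finally have "Im (herm_inner w (cmat A *v w)) = 0"
    unfolding expand by (simp add: Im_sum Re_vec_def Im_vec_def algebra_simps sum_subtractf)
  with re show ?thesis
    by (simp add: complex_eq_iff)
qed

text \<open>For \<open>P Q v = \<lambda> v\<close> and \<open>w = Q v\<close> one has \<open>\<langle>w, P w\<rangle> = \<lambda> \<langle>v, Q v\<rangle>\<close>,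
  and both Hermitian forms are real, the first non-negative and the second positive.\<close>
lemma is_eigenvalue_mult_pos_def_sym:
  fixes P Q :: "real^'n^'n"
  assumes P_sym: "sym_mat P" and P_nonneg: "\<And>x. 0 \<le> x \<bullet> (P *v x)"
    and Q_pd: "pos_def_sym Q"
    and eig: "is_eigenvalue (P ** Q) lam"
  shows "Im lam = 0 \<and> 0 \<le> Re lam"
proof -
  obtain v where "v \<noteq> 0" and v: "cmat (P ** Q) *v v = lam *s v"
    using eig unfolding is_eigenvalue_def by blast
  have Q_sym: "sym_mat Q"
    using Q_pd by (simp add: pos_def_sym_def)
  define w where "w = cmat Q *v v"
  define qP where "qP = Re_vec w \<bullet> (P *v Re_vec w) + Im_vec w \<bullet> (P *v Im_vec w)"
  define qQ where "qQ = Re_vec v \<bullet> (Q *v Re_vec v) + Im_vec v \<bullet> (Q *v Im_vec v)"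
  have "0 \<le> qP"
    unfolding qP_def using P_nonneg by (simp add: add_nonneg_nonneg)
  have "Re_vec v \<noteq> 0 \<or> Im_vec v \<noteq> 0"
    using \<open>v \<noteq> 0\<close> Re_vec_Im_vec_eq_0 by blast
  then have "0 < qQ"
    unfolding qQ_def using Q_pd pos_def_sym_nonneg
    by (metis add_pos_nonneg add_nonneg_pos pos_def_sym_def)
  have "complex_of_real qP = herm_inner w (cmat P *v w)"
    unfolding qP_def by (rule herm_inner_sym_mat[OF P_sym, symmetric])
  also have "cmat P *v w = lam *s v"
    using v by (simp add: w_def cmat_mult matrix_vector_mul_assoc)
  also have "herm_inner w (lam *s v) = lam * herm_inner v (cmat Q *v v)"
    using Q_sym by (simp add: herm_inner_scalar_right w_def herm_inner_cmat_right sym_mat_def)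
  also have "herm_inner v (cmat Q *v v) = complex_of_real qQ"
    unfolding qQ_def by (rule herm_inner_sym_mat[OF Q_sym])
  finally have "lam = complex_of_real (qP / qQ)"
    using \<open>0 < qQ\<close> by (simp add: field_simps)
  then show ?thesis
    using \<open>0 \<le> qP\<close> \<open>0 < qQ\<close> by simp
qed

lemma is_eigenvalue_scaled_mult_pos_def_sym:
  fixes P Q :: "real^'n^'n"
  assumes "0 < c" "pos_def_sym P" "pos_def_sym Q" "is_eigenvalue (c *\<^sub>R (P ** Q)) lam"
  shows "Im lam = 0 \<and> 0 \<le> Re lam"
proof -
  have "is_eigenvalue (P ** Q) (lam / complex_of_real c)"
    using assms(1,4) by (intro is_eigenvalue_scaleR) auto
  then have "Im (lam / complex_of_real c) = 0 \<and> 0 \<le> Re (lam / complex_of_real c)"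
    using assms(2,3) pos_def_sym_nonneg
    by (intro is_eigenvalue_mult_pos_def_sym) (auto simp: pos_def_sym_def)
  then show ?thesis
    using \<open>0 < c\<close> by (simp add: Re_divide_of_real Im_divide_of_real zero_le_divide_iff)
qed

lemma jacobian_at_eq:
  fixes g :: "real^'n \<Rightarrow> real^'m"
  assumes "(g has_derivative (\<lambda>h. L *v h)) (at x)"
  shows "jacobian g (at x) = L"
  using frechet_derivative_at[OF assms] unfolding jacobian_def
  by (metis matrix_of_matrix_vector_mul)

lemma jacobian_id: "jacobian (\<lambda>v::real^'n. v) (at u) = mat 1"
  by (rule jacobian_at_eq) (simp add: has_derivative_ident)

lemma jacobian_sum_scaleR:
  fixes M :: "'i \<Rightarrow> real^'n \<Rightarrow> real^'m"
  assumes "\<And>i. i \<in> I \<Longrightarrow> M i differentiable (at u)"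
  shows "jacobian (\<lambda>v. \<Sum>i\<in>I. c i *\<^sub>R M i v) (at u) = (\<Sum>i\<in>I. c i *\<^sub>R jacobian (M i) (at u))"
proof (rule jacobian_at_eq)
  have "((\<lambda>v. \<Sum>i\<in>I. c i *\<^sub>R M i v) has_derivative
      (\<lambda>h. \<Sum>i\<in>I. c i *\<^sub>R (jacobian (M i) (at u) *v h))) (at u)"
    using assms jacobian_works by (intro has_derivative_sum has_derivative_scaleR_right) blast
  then show "((\<lambda>v. \<Sum>i\<in>I. c i *\<^sub>R M i v) has_derivative
      (\<lambda>h. (\<Sum>i\<in>I. c i *\<^sub>R jacobian (M i) (at u)) *v h)) (at u)"
    by (simp add: matrix_vector_mult_sum_left scaleR_matrix_vector_assoc)
qed

lemma jacobian_moments: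
  fixes M :: "nat \<Rightarrow> real^'n \<Rightarrow> real^'n"
  assumes M_diff: "\<And>i. i < k \<Longrightarrow> M i differentiable (at u)"
    and M_sum: "\<And>v. (\<Sum>i<k. M i v) = v"
    and M_flux: "\<And>v. (\<Sum>i<k. a i *\<^sub>R M i v) = f v"
  shows "(\<Sum>i<k. jacobian (M i) (at u)) = mat 1"
    and "jacobian f (at u) = (\<Sum>i<k. a i *\<^sub>R jacobian (M i) (at u))"
    and "jacobian (\<lambda>v. \<Sum>i<k. (a i)\<^sup>2 *\<^sub>R M i v) (at u) =
      (\<Sum>i<k. (a i)\<^sup>2 *\<^sub>R jacobian (M i) (at u))"
proof -
  have lin: "jacobian (\<lambda>v. \<Sum>i<k. c i *\<^sub>R M i v) (at u) = (\<Sum>i<k. c i *\<^sub>R jacobian (M i) (at u))"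
    for c
    by (rule jacobian_sum_scaleR) (simp add: M_diff)
  have "(\<lambda>v. \<Sum>i<k. 1 *\<^sub>R M i v) = (\<lambda>v. v)" "(\<lambda>v. \<Sum>i<k. a i *\<^sub>R M i v) = f"
    using M_sum M_flux by auto
  then show "(\<Sum>i<k. jacobian (M i) (at u)) = mat 1"
    and "jacobian f (at u) = (\<Sum>i<k. a i *\<^sub>R jacobian (M i) (at u))"
    and "jacobian (\<lambda>v. \<Sum>i<k. (a i)\<^sup>2 *\<^sub>R M i v) (at u) =
      (\<Sum>i<k. (a i)\<^sup>2 *\<^sub>R jacobian (M i) (at u))"
    using lin[of "\<lambda>_. 1"] lin[of a] lin[of "\<lambda>i. (a i)\<^sup>2"] by (simp_all add: jacobian_id)
qed

lemma moment_defect_eq_sum_congruence: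
  fixes A0 J Jm :: "real^'n^'n" and Ji :: "nat \<Rightarrow> real^'n^'n"
  assumes Ji_sum: "(\<Sum>i<k. Ji i) = mat 1"
    and J_eq: "J = (\<Sum>i<k. a i *\<^sub>R Ji i)"
    and Jm_eq: "Jm = (\<Sum>i<k. (a i)\<^sup>2 *\<^sub>R Ji i)"
  shows "A0 ** (Jm - J ** J) =
    (\<Sum>i<k. transpose (a i *\<^sub>R mat 1 - J) ** (A0 ** Ji i) ** (a i *\<^sub>R mat 1 - J))"
proof -
  define S where "S i = A0 ** Ji i" for i
  have expand: "transpose (c *\<^sub>R mat 1 - J) ** T ** (c *\<^sub>R mat 1 - J) =
      c\<^sup>2 *\<^sub>R T - c *\<^sub>R (T ** J) - c *\<^sub>R (transpose J ** T) + transpose J ** T ** J"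
    for c and T :: "real^'n^'n"
    by (simp add: transpose_diff transpose_scalar matrix_diff_ldistrib matrix_diff_rdistrib
        matrix_scalar_ac scalar_matrix_assoc[symmetric] matrix_mul_assoc power2_eq_square
        algebra_simps)
  have S_sum: "(\<Sum>i<k. S i) = A0"
    using Ji_sum by (simp add: S_def flip: matrix_sum_ldistrib)
  have S_moments: "(\<Sum>i<k. a i *\<^sub>R S i) = A0 ** J" "(\<Sum>i<k. (a i)\<^sup>2 *\<^sub>R S i) = A0 ** Jm"
    by (simp_all add: S_def J_eq Jm_eq matrix_sum_ldistrib matrix_scalar_ac scalar_matrix_assoc)
  have "(\<Sum>i<k. transpose (a i *\<^sub>R mat 1 - J) ** S i ** (a i *\<^sub>R mat 1 - J)) =
      (\<Sum>i<k. (a i)\<^sup>2 *\<^sub>R S i) - (\<Sum>i<k. a i *\<^sub>R S i) ** J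
      - transpose J ** (\<Sum>i<k. a i *\<^sub>R S i) + transpose J ** (\<Sum>i<k. S i) ** J"
    by (simp add: expand sum.distrib sum_subtractf matrix_sum_ldistrib matrix_sum_rdistrib
        matrix_scalar_ac scalar_matrix_assoc)
  also have "\<dots> = A0 ** Jm - A0 ** J ** J - transpose J ** (A0 ** J) + transpose J ** A0 ** J"
    by (simp only: S_sum S_moments)
  also have "\<dots> = A0 ** (Jm - J ** J)"
    by (simp add: matrix_diff_ldistrib matrix_mul_assoc)
  finally show ?thesis
    unfolding S_def by (rule sym)
qed

lemma pos_def_sym_moment_defect:
  fixes A0 J Jm :: "real^'n^'n" and Ji :: "nat \<Rightarrow> real^'n^'n"
  assumes "0 < k"
    and moments: "(\<Sum>i<k. Ji i) = mat 1" "J = (\<Sum>i<k. a i *\<^sub>R Ji i)" "Jm = (\<Sum>i<k. (a i)\<^sup>2 *\<^sub>R Ji i)"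
    and pd: "\<And>i. i < k \<Longrightarrow> pos_def_sym (A0 ** Ji i)"
    and subchar: "spectral_radius J < Min ((\<lambda>i. \<bar>a i\<bar>) ` {..<k})"
  shows "pos_def_sym (A0 ** (Jm - J ** J))"
proof -
  have "Min ((\<lambda>i. \<bar>a i\<bar>) ` {..<k}) \<le> \<bar>a 0\<bar>"
    using \<open>0 < k\<close> by (intro Min_le) auto
  then have "spectral_radius J < \<bar>a 0\<bar>"
    using subchar by linarith
  then have "(a 0 *\<^sub>R mat 1 - J) *v x = 0 \<Longrightarrow> x = 0" for x
    by (rule spectral_radius_less_imp_kernel_trivial)
  then show ?thesis
    unfolding moment_defect_eq_sum_congruence[OF moments]
    using \<open>0 < k\<close> pd by (intro pos_def_sym_sum_congruence) auto
qed

lemma sym_mat_if_partition_of_unity: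
  fixes A0 :: "real^'n^'n" and Ji :: "nat \<Rightarrow> real^'n^'n"
  assumes "(\<Sum>i<k. Ji i) = mat 1" "\<And>i. i < k \<Longrightarrow> sym_mat (A0 ** Ji i)"
  shows "sym_mat A0"
proof -
  have "A0 = (\<Sum>i<k. A0 ** Ji i)"
    using assms(1) by (simp flip: matrix_sum_ldistrib)
  also have "sym_mat \<dots>"
    using assms(2) by (intro sym_mat_sum) simp
  finally show ?thesis .
qed

theorem corollary2:
  fixes k :: nat
    and a :: "nat \<Rightarrow> real"
    and f :: "real^'p \<Rightarrow> real^'p"
    and M :: "nat \<Rightarrow> real^'p \<Rightarrow> real^'p"
    and u :: "real^'p"
    and eta :: "real^'p \<Rightarrow> real"
    and A0 D OmInv :: "real^'p^'p"
    and \<epsilon> \<omega> :: real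
  defines "m2 \<equiv> (\<lambda>v. \<Sum>i<k. (a i)\<^sup>2 *\<^sub>R M i v)"
  assumes k_pos: "k \<ge> 1"
    and f_diff: "\<And>v. f differentiable (at v)"
    and M_diff: "\<And>i v. i < k \<Longrightarrow> M i differentiable (at v)"
    and M_sum: "\<And>v. (\<Sum>i<k. M i v) = v"
    and M_flux: "\<And>v. (\<Sum>i<k. a i *\<^sub>R M i v) = f v"
    and eta_convex: "strictly_convex_on UNIV eta"
    and eta_diff: "\<And>v. eta differentiable (at v)"
    and eta_twice: "gradient_vec eta differentiable (at u)"
    and A0_def: "A0 = hessian eta u"
    and A0_inv: "invertible A0"
    and sym_f: "sym_mat (A0 ** jacobian f (at u))"
    and pd_M: "\<And>i. i < k \<Longrightarrow> pos_def_sym (A0 ** jacobian (M i) (at u))"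
    and subchar: "Min ((\<lambda>i. \<bar>a i\<bar>) ` {..<k}) > spectral_radius (jacobian f (at u))"
    and D_sym: "sym_mat (D ** matrix_inv A0)"
    and D_pos: "\<And>lam. is_eigenvalue (D ** matrix_inv A0) lam \<Longrightarrow> Im lam = 0 \<and> Re lam > 0"
    and eps_pos: "\<epsilon> > 0"
    and omega_pos: "\<omega> > 0"
    and Omega_def: "(\<epsilon> * \<omega>) *\<^sub>R OmInv =
        D ** matrix_inv (jacobian m2 (at u) - jacobian f (at u) ** jacobian f (at u))"
  shows "\<forall>lam. is_eigenvalue (\<epsilon> *\<^sub>R OmInv) lam \<longrightarrow> Im lam = 0 \<and> Re lam \<ge> 0"
proof -
  define J where "J = jacobian f (at u)"
  define Ji where "Ji i = jacobian (M i) (at u)" for i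
  define B where "B = jacobian m2 (at u) - J ** J"
  have moments: "(\<Sum>i<k. Ji i) = mat 1" "J = (\<Sum>i<k. a i *\<^sub>R Ji i)"
    "jacobian m2 (at u) = (\<Sum>i<k. (a i)\<^sup>2 *\<^sub>R Ji i)"
    using jacobian_moments[OF M_diff M_sum M_flux] by (simp_all add: Ji_def J_def m2_def)
  have "pos_def_sym (A0 ** B)"
    unfolding B_def using k_pos pd_M subchar
    by (intro pos_def_sym_moment_defect[OF _ moments]) (simp_all add: Ji_def J_def)
  moreover have "sym_mat A0"
    by (rule sym_mat_if_partition_of_unity[OF moments(1)])
      (use pd_M in \<open>simp add: Ji_def pos_def_sym_def\<close>)
  ultimately have Q_pd: "pos_def_sym (A0 ** matrix_inv B)"
    by (intro pos_def_sym_mult_matrix_inv)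
  have P_pd: "pos_def_sym (D ** matrix_inv A0)"
    using D_sym D_pos by (rule sym_mat_pos_eigenvalues_imp_pos_def_sym)
  have "(D ** matrix_inv A0) ** (A0 ** matrix_inv B) = D ** (matrix_inv A0 ** A0) ** matrix_inv B"
    by (simp only: matrix_mul_assoc)
  also have "\<dots> = (\<epsilon> * \<omega>) *\<^sub>R OmInv"
    by (simp add: matrix_inv_left[OF A0_inv] Omega_def B_def J_def)
  finally have "\<epsilon> *\<^sub>R OmInv = (1 / \<omega>) *\<^sub>R ((D ** matrix_inv A0) ** (A0 ** matrix_inv B))"
    using omega_pos by simp
  then show ?thesis
    using omega_pos P_pd Q_pd is_eigenvalue_scaled_mult_pos_def_sym[of "1 / \<omega>"] by auto
qed

end
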